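(* Let $k\ge2$ and $n\ge 2k$ be integers, and set $\alpha=\frac{2k}{k+1}$, $\beta=\frac nk-2$, $a=\frac{n+\alpha}{2}$, $b=\frac{\alpha+\beta}{2}$, $c=\frac n2$, $d_1=2a+b-2c$, $d_2=c-a+1$, $d_3=4ab(k-1)$. Then the function $$g(t)=\frac{d_1t-d_2(1-t)+\sqrt{(d_1t-d_2(1-t))^2+d_3t}}{2c}$$ is concave on $[0,+\infty)$. *)

theory Defs
  imports "HOL-Analysis.Analysis"
begin

end

theory Submission
  imports Defs
begin

text \<open>Write \<open>g\<close> as \<open>(L(t) + sqrt (L(t)\<^sup>2 + d\<^sub>3 t)) / n\<close> with \<open>L(t) = (d\<^sub>1 + d\<^sub>2) t - d\<^sub>2\<close>.
  The radicand is a quadratic \<open>A t\<^sup>2 + B t + C\<close> that stays positive on \<open>[0, \<infinity>)\<close>, and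
  \<open>(sqrt Q)'' = (4 A C - B\<^sup>2) / (4 Q sqrt Q)\<close>, so the square root is concave as soon as the
  discriminant is nonnegative. With \<open>p = d\<^sub>1 + d\<^sub>2\<close>, \<open>q = d\<^sub>2\<close> this amounts to \<open>d\<^sub>3 \<ge> 4 p q\<close>,
  which holds with room to spare because \<open>d\<^sub>2 = 1/(k+1)\<close> while \<open>d\<^sub>3\<close> grows like \<open>a b k\<close>.\<close>

lemma concave_on_sqrt_quadratic:
  fixes A B C :: real
  assumes "convex S"
    and pos: "\<And>t. t \<in> S \<Longrightarrow> 0 < A * t\<^sup>2 + B * t + C"
    and disc: "4 * A * C \<le> B\<^sup>2"
  shows "concave_on S (\<lambda>t. sqrt (A * t\<^sup>2 + B * t + C))"
proof -
  define Q where "Q t = A * t\<^sup>2 + B * t + C" for t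
  have "concave_on S (\<lambda>t. sqrt (Q t))"
  proof (rule f''_le0_imp_concave[OF \<open>convex S\<close>,
        where f' = "\<lambda>t. (2 * A * t + B) / (2 * sqrt (Q t))"
          and f'' = "\<lambda>t. (4 * A * C - B\<^sup>2) / (4 * Q t * sqrt (Q t))"])
    fix t assume "t \<in> S"
    then have Q: "0 < Q t" by (simp add: Q_def pos)
    have dQ: "(Q has_real_derivative 2 * A * t + B) (at t)"
      unfolding Q_def[abs_def] by (rule derivative_eq_intros | simp)+
    have dS: "((\<lambda>t. sqrt (Q t)) has_real_derivative (2 * A * t + B) / (2 * sqrt (Q t))) (at t)"
      using DERIV_chain2[OF DERIV_real_sqrt[OF Q] dQ] by (simp add: field_simps)
    then show "((\<lambda>t. sqrt (Q t)) has_real_derivative (2 * A * t + B) / (2 * sqrt (Q t))) (at t)" .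
    show "((\<lambda>t. (2 * A * t + B) / (2 * sqrt (Q t))) has_real_derivative
           (4 * A * C - B\<^sup>2) / (4 * Q t * sqrt (Q t))) (at t)"
    proof -
      have "((\<lambda>t. (2 * A * t + B) / (2 * sqrt (Q t))) has_real_derivative
           (2 * A * (2 * sqrt (Q t)) - (2 * A * t + B) * (2 * ((2 * A * t + B) / (2 * sqrt (Q t)))))
             / (2 * sqrt (Q t) * (2 * sqrt (Q t)))) (at t)"
      proof (rule DERIV_divide)
        show "((\<lambda>t. 2 * A * t + B) has_real_derivative 2 * A) (at t)"
          by (rule derivative_eq_intros | simp)+
        show "((\<lambda>t. 2 * sqrt (Q t)) has_real_derivative 2 * ((2 * A * t + B) / (2 * sqrt (Q t)))) (at t)"
          using dS by (rule DERIV_cmult)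
        show "2 * sqrt (Q t) \<noteq> 0" using Q by simp
      qed
      moreover have "(2 * A * (2 * sqrt (Q t)) - (2 * A * t + B) * (2 * ((2 * A * t + B) / (2 * sqrt (Q t)))))
             / (2 * sqrt (Q t) * (2 * sqrt (Q t))) = (4 * A * C - B\<^sup>2) / (4 * Q t * sqrt (Q t))"
      proof -
        define s where "s = sqrt (Q t)"
        define L where "L = 2 * A * t + B"
        have s: "0 < s" "s * s = Q t" using Q by (simp_all add: s_def)
        have "4 * A * Q t - L\<^sup>2 = 4 * A * C - B\<^sup>2"
          by (simp add: Q_def L_def power2_eq_square algebra_simps)
        moreover have "(2 * A * (2 * s) - L * (2 * (L / (2 * s)))) / (2 * s * (2 * s))
            = (4 * A * (s * s) - L\<^sup>2) / (4 * (s * s) * s)"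
          using s(1) by (simp add: field_simps power2_eq_square)
        ultimately show ?thesis by (simp add: s(2) flip: s_def L_def)
      qed
      ultimately show ?thesis by simp
    qed
    show "(4 * A * C - B\<^sup>2) / (4 * Q t * sqrt (Q t)) \<le> 0"
      using Q disc by (simp add: divide_nonpos_pos)
  qed
  then show ?thesis by (simp add: Q_def)
qed

lemma concave_on_affine_plus_sqrt:
  fixes p q e :: real
  assumes p: "0 \<le> p" and q: "0 < q" and e: "4 * p * q \<le> e"
  shows "concave_on {0..} (\<lambda>t. p * t - q + sqrt ((p * t - q)\<^sup>2 + e * t))"
proof -
  have radicand: "(p * t - q)\<^sup>2 + e * t = p\<^sup>2 * t\<^sup>2 + (e - 2 * p * q) * t + q\<^sup>2" for t
    by (simp add: power2_eq_square algebra_simps)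
  have "0 < (p * t - q)\<^sup>2 + e * t" if "0 \<le> t" for t
  proof (cases "p * t = q")
    case True
    with q have "0 < p * t" by simp
    with p that have "0 < p" "0 < t" by (auto simp: zero_less_mult_iff)
    with q e have "0 < e" by (smt (verit) mult_pos_pos)
    with \<open>0 < t\<close> show ?thesis by (simp add: True)
  next
    case False
    with p q that e show ?thesis by (smt (verit) mult_nonneg_nonneg zero_less_power2)
  qed
  moreover have "4 * p\<^sup>2 * q\<^sup>2 \<le> (e - 2 * p * q)\<^sup>2"
  proof -
    have "2 * p * q \<le> e - 2 * p * q" "0 \<le> 2 * p * q" using p q e by simp_all
    then have "(2 * p * q)\<^sup>2 \<le> (e - 2 * p * q)\<^sup>2" by (rule power_mono)
    then show ?thesis by (simp add: power_mult_distrib)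
  qed
  ultimately have "concave_on {0..} (\<lambda>t. sqrt ((p * t - q)\<^sup>2 + e * t))"
    unfolding radicand by (intro concave_on_sqrt_quadratic) auto
  moreover have "concave_on {0..} (\<lambda>t. p * t - q)"
    by (intro concave_on_diff concave_on_cmul) (simp_all add: p concave_on_ident convex_on_const)
  ultimately show ?thesis by (rule concave_on_add[rotated])
qed

lemma coefficient_discriminant_bound:
  fixes K \<alpha> a b :: real
  assumes K: "2 \<le> K" and \<alpha>: "\<alpha> \<le> 2" and a: "2 \<le> a" and b: "2/3 \<le> b"
  shows "4 * (\<alpha> / 2 + b + 1) * (1 / (K + 1)) \<le> 4 * a * b * (K - 1)"
proof -
  have "\<alpha> / 2 + b + 1 \<le> 6 * b" using \<alpha> b by simp
  also have "\<dots> \<le> a * b * ((K - 1) * (K + 1))"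
  proof -
    have "2 * 2 \<le> K * K" using K by (intro mult_mono) simp_all
    then have "3 \<le> (K - 1) * (K + 1)" by (simp add: algebra_simps)
    then have "2 * 3 \<le> a * ((K - 1) * (K + 1))" using a by (intro mult_mono) simp_all
    then show ?thesis using b by (simp add: mult.assoc mult.left_commute[of b] mult_left_mono)
  qed
  finally have "4 * (\<alpha> / 2 + b + 1) / (K + 1) \<le> 4 * (a * b * ((K - 1) * (K + 1))) / (K + 1)"
    using K by (intro divide_right_mono) simp_all
  also have "\<dots> = 4 * a * b * (K - 1)" using K by simp
  finally show ?thesis by simp
qed

theorem lemma6p1:
  fixes k n :: nat and \<alpha> \<beta> a b c d1 d2 d3 :: real and g :: "real \<Rightarrow> real"
  assumes "k \<ge> 2" and "n \<ge> 2 * k"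
    and "\<alpha> = 2 * real k / (real k + 1)"
    and "\<beta> = real n / real k - 2"
    and "a = (real n + \<alpha>) / 2"
    and "b = (\<alpha> + \<beta>) / 2"
    and "c = real n / 2"
    and "d1 = 2 * a + b - 2 * c"
    and "d2 = c - a + 1"
    and "d3 = 4 * a * b * (real k - 1)"
    and "\<And>t. g t = (d1 * t - d2 * (1 - t)
                 + sqrt ((d1 * t - d2 * (1 - t))^2 + d3 * t)) / (2 * c)"
  shows "concave_on {0..} g"
proof -
  have k: "2 \<le> real k" and nk: "2 * real k \<le> real n" using assms(1,2) by simp_all
  have \<alpha>_eq: "\<alpha> = 2 - 2 / (real k + 1)" using assms(3) by (simp add: field_simps)
  moreover have "2 / (real k + 1) \<le> 2 / 3" using k by (intro divide_left_mono) simp_all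
  ultimately have \<alpha>: "4/3 \<le> \<alpha>" "\<alpha> \<le> 2" by simp_all
  have "2 \<le> real n / real k" using nk k by (simp add: le_divide_eq)
  then have "0 \<le> \<beta>" using assms(4) by simp
  then have b: "2/3 \<le> b" using assms(6) \<alpha> by simp
  have a: "2 \<le> a" using assms(5) \<alpha> nk k by simp
  have d2: "d2 = 1 / (real k + 1)" using assms(5,7,9) \<alpha>_eq by simp
  have d12: "d1 + d2 = \<alpha> / 2 + b + 1" using assms(5,7,8,9) by simp
  have disc: "4 * (d1 + d2) * d2 \<le> d3"
    using coefficient_discriminant_bound[OF k \<alpha>(2) a b]
    unfolding d12[symmetric] d2[symmetric] assms(10)[symmetric] .
  have g: "g = (\<lambda>t. ((d1 + d2) * t - d2 + sqrt (((d1 + d2) * t - d2)\<^sup>2 + d3 * t)) / (2 * c))"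
    using assms(11) by (auto simp: algebra_simps)
  show ?thesis
    unfolding g using assms(7) b \<alpha> d2 d12
    by (intro concave_on_cdiv concave_on_affine_plus_sqrt disc) simp_all
qed

end
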